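(* Let $R>0$ and let $A\subset\mathbb{R}^d$ be such that $A$ and $\overline{A^c}$ are $R$-supported bodies and $\partial A=\partial\overline{A^c}$. Then $\mathrm{reach}(A)\ge R$.
   Context: A body is a nonempty closed subset of $\mathbb{R}^d$; $A^c=\mathbb{R}^d\setminus A$; $\overline{X}$ is the closure. $B(x)=\{y:|y-x|<R\}$; $S^{d-1}$ the unit sphere. For a body $A$ and $a\in\partial A$, $\mathcal{N}_R(A,a)=\{v\in S^{d-1}: A\cap B(a+Rv)=\emptyset\}$; $A$ is $R$-supported if $\mathcal{N}_R(A,a)\ne\emptyset$ for all $a\in\partial A$. $\mathrm{Unp}(A)$ is the set of points with a unique nearest point in $A$; $\mathrm{reach}(A,a)=\sup\{\rho>0: \{x:|x-a|<\rho\}\subset\mathrm{Unp}(A)\}$, $\mathrm{reach}(A)=\inf_{a\in A}\mathrm{reach}(A,a)$. *)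

theory Defs
  imports "HOL-Analysis.Analysis" "HOL-Library.Extended_Real"
begin

definition is_body :: "'a::euclidean_space set \<Rightarrow> bool" where
  "is_body A \<longleftrightarrow> A \<noteq> {} \<and> closed A"

definition normals_R :: "real \<Rightarrow> 'a::euclidean_space set \<Rightarrow> 'a \<Rightarrow> 'a set" where
  "normals_R R A a = {v. norm v = 1 \<and> A \<inter> ball (a + R *\<^sub>R v) R = {}}"

definition R_supported :: "real \<Rightarrow> 'a::euclidean_space set \<Rightarrow> bool" where
  "R_supported R A \<longleftrightarrow> is_body A \<and> (\<forall>a \<in> frontier A. normals_R R A a \<noteq> {})"

definition Unp :: "'a::euclidean_space set \<Rightarrow> 'a set" where
  "Unp A = {x. \<exists>!y. y \<in> A \<and> (\<forall>z \<in> A. dist x y \<le> dist x z)}"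

definition reach_at :: "'a::euclidean_space set \<Rightarrow> 'a \<Rightarrow> ereal" where
  "reach_at A a = Sup {ereal \<rho> | \<rho>. \<rho> > 0 \<and> ball a \<rho> \<subseteq> Unp A}"

definition reach :: "'a::euclidean_space set \<Rightarrow> ereal" where
  "reach A = (INF a \<in> A. reach_at A a)"

end

theory Submission
  imports Defs
begin

text \<open>Let \<open>x \<notin> A\<close> lie within distance \<open>R\<close> of \<open>A\<close> and let \<open>p\<close> be a nearest point of \<open>A\<close>
  to \<open>x\<close>. Then \<open>p\<close> is a boundary point, so it carries a radius-\<open>R\<close> ball inside \<open>A\<close> (a
  support ball of the closed complement) and one outside \<open>A\<close>. Both are tangent at \<open>p\<close> and
  disjoint, hence antipodal; the ball around \<open>x\<close> through \<open>p\<close> misses \<open>A\<close>, so \<open>x\<close> lies on the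
  outer normal through \<open>p\<close>. Since \<open>dist x p < R\<close>, every other point of the sphere around \<open>x\<close>
  through \<open>p\<close> lies in the open outer ball, which misses \<open>A\<close>; so \<open>p\<close> is the only nearest point.\<close>

lemma disjoint_balls_dist_ge:
  fixes c1 c2 :: "'a::real_normed_vector"
  assumes "ball c1 r1 \<inter> ball c2 r2 = {}" "r1 > 0" "r2 > 0"
  shows "r1 + r2 \<le> dist c1 c2"
proof (rule ccontr)
  assume close: "\<not> r1 + r2 \<le> dist c1 c2"
  define t where "t = r1 / (r1 + r2)"
  define z where "z = c1 + t *\<^sub>R (c2 - c1)"
  have t: "0 < t" "t < 1" using assms by (auto simp: t_def field_simps)
  have "dist c1 z = t * dist c1 c2" using t
    by (simp add: z_def dist_norm norm_minus_commute)
  also have "\<dots> < t * (r1 + r2)" using close t by simp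
  also have "\<dots> = r1" using assms by (simp add: t_def)
  finally have "z \<in> ball c1 r1" by simp
  have "c2 - z = (1 - t) *\<^sub>R (c2 - c1)" by (simp add: z_def algebra_simps)
  then have "dist c2 z = (1 - t) * dist c1 c2" using t
    by (simp add: dist_norm norm_minus_commute)
  also have "\<dots> < (1 - t) * (r1 + r2)" using close t by simp
  also have "\<dots> = r2" using assms by (simp add: t_def field_simps)
  finally have "z \<in> ball c2 r2" by simp
  with \<open>z \<in> ball c1 r1\<close> show False using assms(1) by blast
qed

lemma disjoint_tangent_balls_opposite:
  fixes p c1 c2 :: "'a::real_inner"
  assumes "ball c1 r1 \<inter> ball c2 r2 = {}" "r1 > 0" "r2 > 0"
    and "dist p c1 = r1" "dist p c2 = r2"
  shows "r1 *\<^sub>R (c2 - p) = r2 *\<^sub>R (p - c1)"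
proof -
  have "r1 + r2 \<le> norm ((p - c1) + (c2 - p))"
    using disjoint_balls_dist_ge[OF assms(1-3)] by (simp add: dist_norm norm_minus_commute)
  moreover have "norm ((p - c1) + (c2 - p)) \<le> norm (p - c1) + norm (c2 - p)"
    by (rule norm_triangle_ineq)
  moreover have "norm (p - c1) = r1" "norm (c2 - p) = r2"
    using assms(4,5) by (simp_all add: dist_norm norm_minus_commute)
  ultimately have "norm ((p - c1) + (c2 - p)) = norm (p - c1) + norm (c2 - p)"
    by linarith
  then show ?thesis
    unfolding norm_triangle_eq using \<open>norm (p - c1) = r1\<close> \<open>norm (c2 - p) = r2\<close> by simp
qed

lemma internally_tangent_sphere_outside_ball:
  fixes p q v :: "'a::real_inner"
  assumes "norm v = 1" "d < R"
    and "dist (p - d *\<^sub>R v) q = d" "R \<le> dist (p - R *\<^sub>R v) q"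
  shows "q = p"
proof -
  define x where "x = p - d *\<^sub>R v"
  have split: "q - (p - R *\<^sub>R v) = (q - x) + (R - d) *\<^sub>R v"
    by (simp add: x_def algebra_simps)
  have nq: "norm (q - x) = d" and nv: "norm ((R - d) *\<^sub>R v) = R - d"
    using assms by (simp_all add: x_def dist_norm norm_minus_commute)
  have "R \<le> norm ((q - x) + (R - d) *\<^sub>R v)"
    using assms(4) split by (simp add: dist_norm norm_minus_commute)
  moreover have "norm ((q - x) + (R - d) *\<^sub>R v) \<le> norm (q - x) + norm ((R - d) *\<^sub>R v)"
    by (rule norm_triangle_ineq)
  ultimately have "norm ((q - x) + (R - d) *\<^sub>R v) = norm (q - x) + norm ((R - d) *\<^sub>R v)"
    using nq nv by linarith
  then have "norm (q - x) *\<^sub>R ((R - d) *\<^sub>R v) = norm ((R - d) *\<^sub>R v) *\<^sub>R (q - x)"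
    by (simp only: norm_triangle_eq)
  then have "(R - d) *\<^sub>R (d *\<^sub>R v) = (R - d) *\<^sub>R (q - x)"
    unfolding nq nv by (simp add: mult.commute)
  then have "d *\<^sub>R v = q - x" using assms(2) by (subst (asm) scaleR_cancel_left) auto
  then show ?thesis by (simp add: x_def)
qed

lemma nearest_point_in_frontier:
  fixes A :: "'a::real_normed_vector set"
  assumes "p \<in> A" "\<forall>z\<in>A. dist x p \<le> dist x z" "x \<notin> A"
  shows "p \<in> frontier A"
proof -
  define d where "d = dist x p"
  have "d > 0" using assms by (auto simp: d_def)
  have "p \<notin> interior A"
  proof
    assume "p \<in> interior A"
    then obtain e where e: "e > 0" "ball p e \<subseteq> A" by (auto simp: mem_interior)
    define s where "s = min (e/2) (d/2) / d"
    have s: "0 < s" "s < 1" using e \<open>d > 0\<close> by (auto simp: s_def field_simps min_def)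
    define y where "y = p + s *\<^sub>R (x - p)"
    have "dist p y = s * d" using s by (simp add: y_def d_def dist_norm norm_minus_commute)
    also have "\<dots> \<le> e/2" using \<open>d > 0\<close> by (simp add: s_def)
    finally have "y \<in> A" using e by auto
    have "x - y = (1 - s) *\<^sub>R (x - p)" by (simp add: y_def algebra_simps)
    then have "dist x y = (1 - s) * d" using s by (simp add: dist_norm d_def)
    also have "\<dots> < d" using s \<open>d > 0\<close> by simp
    finally show False using assms(2) \<open>y \<in> A\<close> by (auto simp: d_def)
  qed
  then show ?thesis using assms(1) closure_subset by (auto simp: frontier_def)
qed

lemma two_sided_support_balls:
  fixes A :: "'a::euclidean_space set"
  assumes "R > 0" "R_supported R A" "R_supported R (closure (- A))"
    and "frontier A = frontier (closure (- A))" "p \<in> frontier A"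
  obtains v where "norm v = 1" "ball (p + R *\<^sub>R v) R \<subseteq> A" "A \<inter> ball (p - R *\<^sub>R v) R = {}"
proof -
  obtain v where v: "norm v = 1" "closure (- A) \<inter> ball (p + R *\<^sub>R v) R = {}"
    using assms(3-5) by (auto simp: R_supported_def normals_R_def)
  obtain u where u: "norm u = 1" "A \<inter> ball (p + R *\<^sub>R u) R = {}"
    using assms(2,5) by (auto simp: R_supported_def normals_R_def)
  have inner: "ball (p + R *\<^sub>R v) R \<subseteq> A" using v(2) closure_subset by blast
  then have "ball (p + R *\<^sub>R u) R \<inter> ball (p + R *\<^sub>R v) R = {}" using u(2) by blast
  from disjoint_tangent_balls_opposite[OF this assms(1) assms(1), where p = p]
  have "(R * R) *\<^sub>R v = (R * R) *\<^sub>R (- u)"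
    using u(1) v(1) assms(1) by (simp add: dist_norm)
  then have "u = - v" using assms(1) by (subst (asm) scaleR_cancel_left) auto
  then show ?thesis using that v(1) inner u(2) by simp
qed

lemma nearest_point_unique_outside:
  fixes A :: "'a::euclidean_space set"
  assumes "R > 0" "R_supported R A" "R_supported R (closure (- A))"
    and "frontier A = frontier (closure (- A))"
    and "x \<notin> A" "dist x p < R"
    and p: "p \<in> A" "\<forall>z\<in>A. dist x p \<le> dist x z"
    and q: "q \<in> A" "\<forall>z\<in>A. dist x q \<le> dist x z"
  shows "q = p"
proof -
  define d where "d = dist x p"
  have "d > 0" using assms(5) p(1) by (auto simp: d_def)
  obtain v where v: "norm v = 1" "ball (p + R *\<^sub>R v) R \<subseteq> A" "A \<inter> ball (p - R *\<^sub>R v) R = {}"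
    using two_sided_support_balls[OF assms(1-4) nearest_point_in_frontier[OF p assms(5)]] .
  have "ball x d \<inter> A = {}" using p(2) by (auto simp: d_def)
  then have "ball x d \<inter> ball (p + R *\<^sub>R v) R = {}" using v(2) by blast
  moreover have "dist p x = d" "dist p (p + R *\<^sub>R v) = R"
    using v(1) assms(1) by (simp_all add: d_def dist_commute dist_norm)
  ultimately have "d *\<^sub>R (p + R *\<^sub>R v - p) = R *\<^sub>R (p - x)"
    using disjoint_tangent_balls_opposite \<open>d > 0\<close> assms(1) by blast
  then have "R *\<^sub>R (d *\<^sub>R v) = R *\<^sub>R (p - x)" by (simp add: mult.commute)
  then have "d *\<^sub>R v = p - x" using assms(1) by (subst (asm) scaleR_cancel_left) auto
  then have "x = p - d *\<^sub>R v" by (simp add: algebra_simps)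
  moreover have "dist x q = d"
    using p(2) q(2) p(1) q(1) unfolding d_def by (meson order_antisym)
  moreover have "R \<le> dist (p - R *\<^sub>R v) q" using v(3) q(1) by auto
  ultimately show ?thesis
    using internally_tangent_sphere_outside_ball[OF v(1)] assms(6) by (simp add: d_def)
qed

lemma ball_subset_Unp:
  fixes A :: "'a::euclidean_space set"
  assumes "R > 0" "R_supported R A" "R_supported R (closure (- A))"
    and "frontier A = frontier (closure (- A))"
    and "a \<in> A"
  shows "ball a R \<subseteq> Unp A"
proof
  fix x assume "x \<in> ball a R"
  have "closed A" "A \<noteq> {}" using assms(2) by (simp_all add: R_supported_def is_body_def)
  then obtain p where p: "p \<in> A" "\<forall>z\<in>A. dist x p \<le> dist x z"
    by (metis distance_attains_inf)
  have "dist x p \<le> dist x a" using p(2) assms(5) by blast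
  with \<open>x \<in> ball a R\<close> have "dist x p < R" by (simp add: dist_commute)
  have unique: "q = p" if q: "q \<in> A" "\<forall>z\<in>A. dist x q \<le> dist x z" for q
  proof (cases "x \<in> A")
    case True
    then have "dist x p \<le> 0" "dist x q \<le> 0" using p(2) q(2) by (metis dist_self)+
    then show ?thesis by simp
  next
    case False
    show ?thesis
      by (rule nearest_point_unique_outside[OF assms(1-4) False \<open>dist x p < R\<close> p q])
  qed
  have "\<exists>!y. y \<in> A \<and> (\<forall>z\<in>A. dist x y \<le> dist x z)"
    using p unique by (intro ex1I[of _ p]) blast+
  then show "x \<in> Unp A" unfolding Unp_def by simp
qed

lemma reach_ge_if_balls_in_Unp:
  assumes "r > 0" "\<And>a. a \<in> A \<Longrightarrow> ball a r \<subseteq> Unp A"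
  shows "ereal r \<le> reach A"
proof -
  have "ereal r \<le> reach_at A a" if "a \<in> A" for a
    unfolding reach_at_def using assms that by (intro Sup_upper) blast
  then show ?thesis unfolding reach_def by (rule INF_greatest)
qed

theorem mainTheorem9:
  fixes A :: "'a::euclidean_space set" and R :: real
  assumes "R > 0"
    and "R_supported R A"
    and "R_supported R (closure (- A))"
    and "frontier A = frontier (closure (- A))"
  shows "reach A \<ge> ereal R"
  using reach_ge_if_balls_in_Unp[OF assms(1) ball_subset_Unp[OF assms]] .

end
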